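(* Let $\Omega$ be a domain in $\mathbb{R}^n$ and $1\le p\le\infty$. Let $f:\mathbb{R}\to\mathbb{R}$ be such that $f\circ u\in L^p(\Omega)$ for every $u\in H^2(\Omega)\cap H^1_0(\Omega)$, and suppose there is a constant $M>0$ with $\|f\circ u\|_{L^p(\Omega)}\le M$ for all $u\in H^2(\Omega)\cap H^1_0(\Omega)$. Then $f$ is bounded on $\mathbb{R}$: there exists $C>0$ with $|f(x)|\le C$ for all $x\in\mathbb{R}$.
   Context: $H^k(\Omega)$ denotes the Sobolev space $W^{k,2}(\Omega)$, and $H^1_0(\Omega)$ the closure of $C_c^\infty(\Omega)$ in $H^1(\Omega)$ (functions vanishing on the boundary). *)

theory Defs
  imports "HOL-Analysis.Analysis"
begin

definition pderiv :: "'a::euclidean_space \<Rightarrow> ('a \<Rightarrow> real) \<Rightarrow> 'a \<Rightarrow> real" where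
  "pderiv b f x = frechet_derivative f (at x) b"

fun Ck :: "nat \<Rightarrow> ('a::euclidean_space \<Rightarrow> real) \<Rightarrow> bool" where
  "Ck 0 f = continuous_on UNIV f"
| "Ck (Suc k) f = ((\<forall>x. f differentiable (at x)) \<and> continuous_on UNIV f \<and>
                   (\<forall>b\<in>Basis. Ck k (pderiv b f)))"

definition smooth :: "('a::euclidean_space \<Rightarrow> real) \<Rightarrow> bool" where
  "smooth f = (\<forall>k. Ck k f)"

definition test_fun :: "'a::euclidean_space set \<Rightarrow> ('a \<Rightarrow> real) \<Rightarrow> bool" where
  "test_fun \<Omega> \<phi> = (smooth \<phi> \<and> compact (closure {x. \<phi> x \<noteq> 0}) \<and> closure {x. \<phi> x \<noteq> 0} \<subseteq> \<Omega>)"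

definition L2 :: "'a::euclidean_space set \<Rightarrow> ('a \<Rightarrow> real) \<Rightarrow> bool" where
  "L2 \<Omega> u = (u \<in> borel_measurable (lebesgue_on \<Omega>) \<and> integrable (lebesgue_on \<Omega>) (\<lambda>x. (u x)^2))"

definition weak_pderiv :: "'a::euclidean_space set \<Rightarrow> 'a \<Rightarrow> ('a \<Rightarrow> real) \<Rightarrow> ('a \<Rightarrow> real) \<Rightarrow> bool" where
  "weak_pderiv \<Omega> b u g = (\<forall>\<phi>. test_fun \<Omega> \<phi> \<longrightarrow>
      integrable (lebesgue_on \<Omega>) (\<lambda>x. u x * pderiv b \<phi> x) \<and>
      integrable (lebesgue_on \<Omega>) (\<lambda>x. g x * \<phi> x) \<and>
      (\<integral>x. u x * pderiv b \<phi> x \<partial>lebesgue_on \<Omega>) = - (\<integral>x. g x * \<phi> x \<partial>lebesgue_on \<Omega>))"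

definition H1 :: "'a::euclidean_space set \<Rightarrow> ('a \<Rightarrow> real) \<Rightarrow> bool" where
  "H1 \<Omega> u = (L2 \<Omega> u \<and> (\<forall>b\<in>Basis. \<exists>g. L2 \<Omega> g \<and> weak_pderiv \<Omega> b u g))"

definition H2 :: "'a::euclidean_space set \<Rightarrow> ('a \<Rightarrow> real) \<Rightarrow> bool" where
  "H2 \<Omega> u = (L2 \<Omega> u \<and> (\<forall>b\<in>Basis. \<exists>g. L2 \<Omega> g \<and> weak_pderiv \<Omega> b u g \<and>
        (\<forall>c\<in>Basis. \<exists>h. L2 \<Omega> h \<and> weak_pderiv \<Omega> c g h)))"

definition H10 :: "'a::euclidean_space set \<Rightarrow> ('a \<Rightarrow> real) \<Rightarrow> bool" where
  "H10 \<Omega> u = (H1 \<Omega> u \<and> (\<exists>\<phi>s. (\<forall>k. test_fun \<Omega> (\<phi>s k)) \<and>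
      ((\<lambda>k. \<integral>x. (\<phi>s k x - u x)^2 \<partial>lebesgue_on \<Omega>) \<longlonglongrightarrow> 0) \<and>
      (\<forall>b\<in>Basis. \<exists>g. L2 \<Omega> g \<and> weak_pderiv \<Omega> b u g \<and>
          ((\<lambda>k. \<integral>x. (pderiv b (\<phi>s k) x - g x)^2 \<partial>lebesgue_on \<Omega>) \<longlonglongrightarrow> 0))))"

definition Lp :: "ennreal \<Rightarrow> 'a::euclidean_space set \<Rightarrow> ('a \<Rightarrow> real) \<Rightarrow> bool" where
  "Lp p \<Omega> v = (v \<in> borel_measurable (lebesgue_on \<Omega>) \<and>
     (if p = \<infinity> then (\<exists>C. AE x in lebesgue_on \<Omega>. \<bar>v x\<bar> \<le> C)
      else integrable (lebesgue_on \<Omega>) (\<lambda>x. \<bar>v x\<bar> powr enn2real p)))"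

definition Lp_norm :: "ennreal \<Rightarrow> 'a::euclidean_space set \<Rightarrow> ('a \<Rightarrow> real) \<Rightarrow> real" where
  "Lp_norm p \<Omega> v = (if p = \<infinity> then Inf {C. 0 \<le> C \<and> (AE x in lebesgue_on \<Omega>. \<bar>v x\<bar> \<le> C)}
      else (\<integral>x. \<bar>v x\<bar> powr enn2real p \<partial>lebesgue_on \<Omega>) powr (1 / enn2real p))"

end

theory Submission
  imports Defs
begin

text \<open>Test functions belong to \<open>H\<^sup>2(\<Omega>) \<inter> H\<^sup>1\<^sub>0(\<Omega>)\<close>, their weak derivatives being the classical
  ones by integration by parts. Fix a ball \<open>S\<close> with \<open>cball a r \<subseteq> \<Omega>\<close>; for every \<open>t\<close> a smooth
  cutoff yields a test function equal to \<open>t\<close> on \<open>S\<close>, so \<open>f \<circ> u\<close> equals \<open>f t\<close> on \<open>S\<close> and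
  \<open>\<bar>f t\<bar> |S|\<^bsup>1/p\<^esup> \<le> \<parallel>f \<circ> u\<parallel>\<^sub>p \<le> M\<close>. Hence \<open>\<bar>f t\<bar> \<le> M / |S|\<^bsup>1/p\<^esup>\<close> for all \<open>t\<close>.\<close>

definition exp_neg_inv :: "nat \<Rightarrow> real \<Rightarrow> real" where
  "exp_neg_inv n t = (if t > 0 then exp (- 1 / t) / t ^ n else 0)"

lemma tendsto_exp_neg_inv_at_right_0: "((\<lambda>t::real. exp (- 1 / t) / t ^ n) \<longlongrightarrow> 0) (at_right 0)"
proof -
  have "(((\<lambda>z::real. z ^ n / exp z) \<circ> inverse) \<longlongrightarrow> 0) (at_right 0)"
    using filterlim_compose[OF tendsto_power_div_exp_0 filterlim_inverse_at_top_right] by (simp add: o_def)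
  then show ?thesis
    by (rule Lim_transform_eventually, intro eventually_at_rightI[where b=1])
      (auto simp: field_simps power_inverse exp_minus_inverse)
qed

lemma exp_neg_inv_has_derivative:
  "(exp_neg_inv n has_real_derivative exp_neg_inv (n + 2) t - real n * exp_neg_inv (n + 1) t) (at t)"
proof (cases t "0::real" rule: linorder_cases)
  case less
  have "((\<lambda>t. 0) has_real_derivative exp_neg_inv (n + 2) t - real n * exp_neg_inv (n + 1) t) (at t)"
    using less by (simp add: exp_neg_inv_def)
  then show ?thesis
    by (rule has_field_derivative_transform_within_open[where S="{..<0}"])
      (use less in \<open>auto simp: exp_neg_inv_def\<close>)
next
  case greater
  have "((\<lambda>t. exp (- 1 / t) / t ^ n) has_real_derivative
          exp_neg_inv (n + 2) t - real n * exp_neg_inv (n + 1) t) (at t)"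
    using greater
    by (auto intro!: derivative_eq_intros simp: exp_neg_inv_def, cases n, auto simp: field_simps power2_eq_square)
  then show ?thesis
    by (rule has_field_derivative_transform_within_open[where S="{0<..}"])
      (use greater in \<open>auto simp: exp_neg_inv_def\<close>)
next
  case equal
  have "((\<lambda>y. (exp_neg_inv n y - exp_neg_inv n 0) / (y - 0)) \<longlongrightarrow> 0) (at 0)"
  proof (rule filterlim_split_at)
    show "((\<lambda>y. (exp_neg_inv n y - exp_neg_inv n 0) / (y - 0)) \<longlongrightarrow> 0) (at_left 0)"
      by (rule Lim_transform_eventually[OF tendsto_const], intro eventually_at_leftI[where a="-1"])
        (auto simp: exp_neg_inv_def)
    show "((\<lambda>y. (exp_neg_inv n y - exp_neg_inv n 0) / (y - 0)) \<longlongrightarrow> 0) (at_right 0)"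
      by (rule Lim_transform_eventually[OF tendsto_exp_neg_inv_at_right_0[of "Suc n"]],
          intro eventually_at_rightI[where b=1])
        (auto simp: exp_neg_inv_def field_simps)
  qed
  then show ?thesis
    using equal by (simp add: has_field_derivative_iff exp_neg_inv_def)
qed

text \<open>A class of functions whose smoothness follows by induction over its construction:
  the partial derivatives of each member are again members.\<close>

inductive_set elem_smooth :: "('a::euclidean_space \<Rightarrow> real) set" where
  const: "(\<lambda>x. c) \<in> elem_smooth"
| inner: "(\<lambda>x. x \<bullet> c) \<in> elem_smooth"
| inner_self: "(\<lambda>x. x \<bullet> x) \<in> elem_smooth"
| add: "f \<in> elem_smooth \<Longrightarrow> g \<in> elem_smooth \<Longrightarrow> (\<lambda>x. f x + g x) \<in> elem_smooth"
| mult: "f \<in> elem_smooth \<Longrightarrow> g \<in> elem_smooth \<Longrightarrow> (\<lambda>x. f x * g x) \<in> elem_smooth"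
| exp_neg_inv: "f \<in> elem_smooth \<Longrightarrow> (\<lambda>x. exp_neg_inv n (f x)) \<in> elem_smooth"
| inverse: "f \<in> elem_smooth \<Longrightarrow> (\<forall>x. f x > 0) \<Longrightarrow> (\<lambda>x. inverse (f x)) \<in> elem_smooth"

lemma elem_smooth_has_derivative:
  "f \<in> elem_smooth \<Longrightarrow>
     \<exists>f'. (\<forall>x. (f has_derivative f' x) (at x)) \<and> (\<forall>v. (\<lambda>x. f' x v) \<in> elem_smooth)"
proof (induction rule: elem_smooth.induct)
  case (const c)
  show ?case by (rule exI[of _ "\<lambda>x v. 0"]) (auto intro: elem_smooth.const)
next
  case (inner c)
  show ?case by (rule exI[of _ "\<lambda>x v. v \<bullet> c"]) (auto intro!: elem_smooth.const derivative_eq_intros)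
next
  case inner_self
  have "(\<lambda>x. x \<bullet> v + x \<bullet> v) \<in> elem_smooth" for v :: 'a
    by (intro elem_smooth.intros)
  then show ?case
    by (intro exI[of _ "\<lambda>x v. x \<bullet> v + v \<bullet> x"])
      (auto intro!: derivative_eq_intros simp: inner_commute)
next
  case (add f g)
  then obtain f' g' where "\<forall>x. (f has_derivative f' x) (at x)" "\<forall>v. (\<lambda>x. f' x v) \<in> elem_smooth"
    and "\<forall>x. (g has_derivative g' x) (at x)" "\<forall>v. (\<lambda>x. g' x v) \<in> elem_smooth" by blast
  then show ?case
    by (intro exI[of _ "\<lambda>x v. f' x v + g' x v"]) (auto intro!: elem_smooth.intros derivative_eq_intros)
next
  case (mult f g)
  then obtain f' g' where "\<forall>x. (f has_derivative f' x) (at x)" "\<forall>v. (\<lambda>x. f' x v) \<in> elem_smooth"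
    and "\<forall>x. (g has_derivative g' x) (at x)" "\<forall>v. (\<lambda>x. g' x v) \<in> elem_smooth" by blast
  with mult.hyps show ?case
    by (intro exI[of _ "\<lambda>x v. f x * g' x v + f' x v * g x"]) (auto intro!: elem_smooth.intros derivative_eq_intros)
next
  case (exp_neg_inv f n)
  then obtain f' where f': "\<forall>x. (f has_derivative f' x) (at x)" "\<forall>v. (\<lambda>x. f' x v) \<in> elem_smooth"
    by blast
  define g where "g t = exp_neg_inv (n + 2) t + (- real n) * exp_neg_inv (n + 1) t" for t
  have "((\<lambda>x. exp_neg_inv n (f x)) has_derivative (\<lambda>v. f' x v * g (f x))) (at x)" for x
    using DERIV_compose_FDERIV[OF exp_neg_inv_has_derivative f'(1)[rule_format]] by (simp add: g_def)
  moreover have "(\<lambda>x. f' x v * g (f x)) \<in> elem_smooth" for v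
    unfolding g_def using f' exp_neg_inv.hyps by (intro elem_smooth.intros) auto
  ultimately show ?case by (intro exI[of _ "\<lambda>x v. f' x v * g (f x)"]) auto
next
  case (inverse f)
  then obtain f' where f': "\<forall>x. (f has_derivative f' x) (at x)" "\<forall>v. (\<lambda>x. f' x v) \<in> elem_smooth"
    by blast
  have "((\<lambda>x. inverse (f x)) has_derivative (\<lambda>v. f' x v * ((-1) * (inverse (f x) * inverse (f x))))) (at x)" for x
  proof -
    have "f x \<noteq> 0"
      using inverse.hyps(2) by (metis less_irrefl)
    from DERIV_compose_FDERIV[OF DERIV_inverse[OF this] f'(1)[rule_format]] show ?thesis
      by (simp add: power2_eq_square)
  qed
  moreover have "(\<lambda>x. f' x v * ((-1) * (inverse (f x) * inverse (f x)))) \<in> elem_smooth" for v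
    using f' inverse.hyps by (intro elem_smooth.intros) auto
  ultimately show ?case
    by (intro exI[of _ "\<lambda>x v. f' x v * ((-1) * (inverse (f x) * inverse (f x)))"]) auto
qed

lemma elem_smooth_Ck: "f \<in> elem_smooth \<Longrightarrow> Ck k f"
proof (induction k arbitrary: f)
  case 0
  then obtain f' where "\<forall>x. (f has_derivative f' x) (at x)"
    using elem_smooth_has_derivative by blast
  then show ?case
    by (auto intro!: differentiable_imp_continuous_on simp: differentiable_on_def differentiable_def) blast
next
  case (Suc k)
  then obtain f' where f': "\<forall>x. (f has_derivative f' x) (at x)" "\<forall>v. (\<lambda>x. f' x v) \<in> elem_smooth"
    using elem_smooth_has_derivative by blast
  then have "pderiv b f = (\<lambda>x. f' x b)" for b
    by (metis pderiv_def frechet_derivative_at)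
  with f' Suc.IH show ?case
    by (auto intro!: differentiable_imp_continuous_on simp: differentiable_on_def differentiable_def) blast+
qed

lemma elem_smooth_diff: "f \<in> elem_smooth \<Longrightarrow> g \<in> elem_smooth \<Longrightarrow> (\<lambda>x. f x - g x) \<in> elem_smooth"
  using elem_smooth.add[OF _ elem_smooth.mult[OF elem_smooth.const[of "-1"]], of f g] by simp

lemma elem_smooth_divide:
  "f \<in> elem_smooth \<Longrightarrow> g \<in> elem_smooth \<Longrightarrow> (\<forall>x. g x > 0) \<Longrightarrow> (\<lambda>x. f x / g x) \<in> elem_smooth"
  using elem_smooth.mult[OF _ elem_smooth.inverse, of f g] by (simp add: divide_inverse)

lemma norm_diff_squared_elem_smooth: "(\<lambda>x. (norm (x - a))\<^sup>2) \<in> elem_smooth"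
proof -
  have "(\<lambda>x. x \<bullet> x + (x \<bullet> a) * (-2) + a \<bullet> a) \<in> elem_smooth"
    by (intro elem_smooth.intros)
  then show ?thesis
    by (simp add: power2_norm_eq_inner inner_diff inner_commute algebra_simps)
qed

text \<open>\<open>r\<^sub>1 < r\<^sub>2\<close> are squared radii. The denominator is positive because its two summands
  never vanish simultaneously.\<close>

definition cutoff :: "'a::euclidean_space \<Rightarrow> real \<Rightarrow> real \<Rightarrow> 'a \<Rightarrow> real" where
  "cutoff a r\<^sub>1 r\<^sub>2 x = exp_neg_inv 0 (r\<^sub>2 - (norm (x - a))\<^sup>2) /
     (exp_neg_inv 0 (r\<^sub>2 - (norm (x - a))\<^sup>2) + exp_neg_inv 0 ((norm (x - a))\<^sup>2 - r\<^sub>1))"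

lemma cutoff_elem_smooth:
  assumes "r\<^sub>1 < r\<^sub>2"
  shows "cutoff a r\<^sub>1 r\<^sub>2 \<in> elem_smooth"
proof -
  have "exp_neg_inv 0 (r\<^sub>2 - s) + exp_neg_inv 0 (s - r\<^sub>1) > 0" for s
    using assms by (cases "s < r\<^sub>2") (auto simp: exp_neg_inv_def add_pos_nonneg add_nonneg_pos)
  then show ?thesis
    unfolding cutoff_def
    by (intro elem_smooth_divide elem_smooth.add elem_smooth.exp_neg_inv elem_smooth_diff
        elem_smooth.const norm_diff_squared_elem_smooth) auto
qed

lemma cutoff_eq_1: "r\<^sub>1 < r\<^sub>2 \<Longrightarrow> (norm (x - a))\<^sup>2 \<le> r\<^sub>1 \<Longrightarrow> cutoff a r\<^sub>1 r\<^sub>2 x = 1"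
  by (simp add: cutoff_def exp_neg_inv_def)

lemma cutoff_eq_0: "r\<^sub>2 \<le> (norm (x - a))\<^sup>2 \<Longrightarrow> cutoff a r\<^sub>1 r\<^sub>2 x = 0"
  by (simp add: cutoff_def exp_neg_inv_def)

lemma test_fun_const_on_ball:
  assumes "0 < r" "cball a r \<subseteq> \<Omega>"
  obtains u where "test_fun \<Omega> u" "\<And>x. x \<in> cball a (r / 2) \<Longrightarrow> u x = c"
proof
  define u where "u x = c * cutoff a ((r / 2)\<^sup>2) (r\<^sup>2) x" for x
  have radii: "(r / 2)\<^sup>2 < r\<^sup>2"
    using assms(1) by (simp add: power_divide)
  show "u x = c" if "x \<in> cball a (r / 2)" for x
  proof -
    have "(norm (x - a))\<^sup>2 \<le> (r / 2)\<^sup>2"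
      using that by (intro power_mono) (auto simp: dist_norm norm_minus_commute)
    then show ?thesis
      unfolding u_def by (simp add: cutoff_eq_1[OF radii])
  qed
  have "{x. u x \<noteq> 0} \<subseteq> ball a r"
  proof
    fix x assume "x \<in> {x. u x \<noteq> 0}"
    then have "\<not> r\<^sup>2 \<le> (norm (x - a))\<^sup>2"
      using cutoff_eq_0 by (auto simp: u_def)
    then show "x \<in> ball a r"
      using assms(1) by (simp add: not_le power_less_imp_less_base dist_norm norm_minus_commute)
  qed
  then have "closure {x. u x \<noteq> 0} \<subseteq> cball a r" "bounded {x. u x \<noteq> 0}"
    by (meson closure_minimal ball_subset_cball closed_cball order_trans, rule bounded_subset[OF bounded_ball])
  moreover have "smooth u"
    unfolding smooth_def u_def
    by (intro allI elem_smooth_Ck elem_smooth.mult elem_smooth.const cutoff_elem_smooth radii)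
  ultimately show "test_fun \<Omega> u"
    using assms(2) by (auto simp: test_fun_def compact_closure)
qed

lemma integrable_lborel_compact_support:
  fixes g :: "'a::euclidean_space \<Rightarrow> real"
  assumes "continuous_on UNIV g" "compact K" "\<And>x. x \<notin> K \<Longrightarrow> g x = 0"
  shows "integrable lborel g"
proof -
  have "integrable lborel (\<lambda>x. indicator K x *\<^sub>R g x)"
    using assms by (intro borel_integrable_compact) (auto intro: continuous_on_subset)
  also have "(\<lambda>x. indicator K x *\<^sub>R g x) = g"
    using assms(3) by (auto simp: fun_eq_iff indicator_def)
  finally show ?thesis .
qed

lemma lborel_integral_translate:
  fixes w :: "'a::euclidean_space \<Rightarrow> real"
  assumes "w \<in> borel_measurable borel"
  shows "integrable lborel (\<lambda>x. w (c + x)) \<longleftrightarrow> integrable lborel w"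
    and "(\<integral>x. w (c + x) \<partial>lborel) = integral\<^sup>L lborel w"
  using integrable_distr_eq[of "(+) c" lborel borel w] integral_distr[of "(+) c" lborel borel w] assms
  by (simp_all add: lborel_distr_plus)

lemma has_real_derivative_along_line:
  fixes w :: "'a::real_normed_vector \<Rightarrow> real"
  assumes "(w has_derivative W) (at (x + \<tau> *\<^sub>R v))"
  shows "((\<lambda>\<tau>. w (x + \<tau> *\<^sub>R v)) has_real_derivative W v) (at \<tau>)"
proof -
  have "((\<lambda>\<tau>. x + \<tau> *\<^sub>R v) has_derivative (\<lambda>t. t *\<^sub>R v)) (at \<tau>)"
    by (auto intro!: derivative_eq_intros)
  from has_derivative_compose[OF this assms] show ?thesis
    using linear_cmul[OF has_derivative_linear[OF assms]]
    by (simp add: has_field_derivative_def mult.commute[of _ "W v"])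
qed

lemma difference_quotient_bound:
  fixes w :: "'a::real_normed_vector \<Rightarrow> real"
  assumes "\<And>y. (w has_derivative W y) (at y)" "0 < h"
    and "\<And>\<tau>. 0 < \<tau> \<Longrightarrow> \<tau> < h \<Longrightarrow> \<bar>W (x + \<tau> *\<^sub>R v) v\<bar> \<le> B"
  shows "\<bar>(w (x + h *\<^sub>R v) - w x) / h\<bar> \<le> B"
proof -
  obtain \<tau> where "0 < \<tau>" "\<tau> < h"
    and "w (x + h *\<^sub>R v) - w (x + 0 *\<^sub>R v) = (h - 0) * W (x + \<tau> *\<^sub>R v) v"
    using MVT2[of 0 h "\<lambda>\<tau>. w (x + \<tau> *\<^sub>R v)" "\<lambda>\<tau>. W (x + \<tau> *\<^sub>R v) v"]
      assms(1,2) has_real_derivative_along_line by blast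
  with assms(2) assms(3)[of \<tau>] show ?thesis
    by simp
qed

lemma difference_quotient_dominated:
  fixes w :: "'a::real_normed_vector \<Rightarrow> real"
  assumes deriv: "\<And>y. (w has_derivative W y) (at y)"
    and bound: "\<And>y. norm y \<le> R + 2 * norm v \<Longrightarrow> \<bar>W y v\<bar> \<le> B"
    and supp: "\<And>y. R < norm y \<Longrightarrow> w y = 0"
    and h: "0 < h" "h \<le> 1"
  shows "\<bar>(w (x + h *\<^sub>R v) - w x) / h\<bar> \<le> indicator (cball 0 (R + norm v)) x * B"
proof (cases "norm x \<le> R + norm v")
  case True
  have W_bound: "\<bar>W (x + \<tau> *\<^sub>R v) v\<bar> \<le> B" if "0 < \<tau>" "\<tau> < h" for \<tau>
  proof (rule bound)
    have "\<tau> * norm v \<le> norm v"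
      using that h by (simp add: mult_left_le_one_le)
    then show "norm (x + \<tau> *\<^sub>R v) \<le> R + 2 * norm v"
      using True that norm_triangle_ineq[of x "\<tau> *\<^sub>R v"] by simp
  qed
  with True show ?thesis
    using difference_quotient_bound[OF deriv h(1) W_bound] by simp
next
  case False
  have "norm (h *\<^sub>R v) \<le> norm v"
    using h by (simp add: mult_left_le_one_le)
  then have "R < norm (x + h *\<^sub>R v)" "R < norm x"
    using False norm_diff_ineq[of x "h *\<^sub>R v"] norm_ge_zero[of v] by linarith+
  with False show ?thesis
    by (simp add: supp)
qed

text \<open>The integral of a difference quotient of \<open>w\<close> vanishes by translation invariance; the
  quotients converge to \<open>W x v\<close> and are dominated by a multiple of an indicator of a ball.\<close>

lemma integral_directional_derivative_eq_0:
  fixes w :: "'a::euclidean_space \<Rightarrow> real"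
  assumes deriv: "\<And>x. (w has_derivative W x) (at x)"
    and cont: "continuous_on UNIV (\<lambda>x. W x v)"
    and "compact K" and supp: "\<And>x. x \<notin> K \<Longrightarrow> w x = 0"
  shows "(\<integral>x. W x v \<partial>lborel) = 0"
proof -
  have w_cont: "continuous_on UNIV w"
    using deriv by (meson continuous_on_eq_continuous_within has_derivative_continuous has_derivative_at_withinI)
  then have w_borel: "w \<in> borel_measurable borel"
    by (rule borel_measurable_continuous_onI)
  obtain R where R: "\<And>x. x \<in> K \<Longrightarrow> norm x \<le> R"
    using compact_imp_bounded[OF \<open>compact K\<close>] bounded_pos by metis
  then have supp_ball: "w y = 0" if "R < norm y" for y
    using supp that by force
  have "compact ((\<lambda>y. W y v) ` cball 0 (R + 2 * norm v))"
    by (rule compact_continuous_image) (auto intro: continuous_on_subset[OF cont])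
  then obtain B where "\<And>y. y \<in> cball 0 (R + 2 * norm v) \<Longrightarrow> \<bar>W y v\<bar> \<le> B"
    using compact_imp_bounded bounded_iff by (metis image_eqI real_norm_def)
  then have B: "\<bar>W y v\<bar> \<le> B" if "norm y \<le> R + 2 * norm v" for y
    using that by simp
  define h where "h n = inverse (real (Suc n))" for n
  have h: "0 < h n" "h n \<le> 1" for n
    by (auto simp: h_def field_simps)
  define s where "s n x = (w (x + h n *\<^sub>R v) - w x) / h n" for n x
  have "(\<lambda>n. integral\<^sup>L lborel (s n)) \<longlonglongrightarrow> (\<integral>x. W x v \<partial>lborel)"
  proof (rule integral_dominated_convergence[where w="\<lambda>x. indicator (cball 0 (R + norm v)) x * B"])
    show "(\<lambda>x. W x v) \<in> borel_measurable lborel" "s n \<in> borel_measurable lborel" for n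
      using cont w_cont h(1)[of n] by (auto simp: s_def intro!: borel_measurable_continuous_onI continuous_intros
          continuous_on_compose2[OF w_cont])
    show "integrable lborel (\<lambda>x. indicator (cball 0 (R + norm v)) x * B)"
      using borel_integrable_compact[of "cball 0 (R + norm v)" "\<lambda>_. B"]
      by (simp add: mult.commute)
    have diff_quot: "((\<lambda>\<tau>. (w (x + \<tau> *\<^sub>R v) - w x) / \<tau>) \<longlongrightarrow> W x v) (at 0)" for x
      using has_real_derivative_along_line[of w "W x" x 0 v] deriv by (simp add: has_field_derivative_iff)
    have "filterlim h (at 0) sequentially"
      unfolding h_def using LIMSEQ_inverse_real_of_nat by (intro filterlim_atI) auto
    from filterlim_compose[OF diff_quot this]
    show "AE x in lborel. (\<lambda>n. s n x) \<longlonglongrightarrow> W x v"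
      by (simp add: s_def o_def)
    show "AE x in lborel. norm (s n x) \<le> indicator (cball 0 (R + norm v)) x * B" for n
      using difference_quotient_dominated[OF deriv B supp_ball h] by (simp add: s_def)
  qed
  moreover have "integral\<^sup>L lborel (s n) = 0" for n
    unfolding s_def using integrable_lborel_compact_support[OF w_cont \<open>compact K\<close> supp]
      lborel_integral_translate[OF w_borel, of "h n *\<^sub>R v"]
    by (simp add: add.commute)
  ultimately show ?thesis
    by (simp add: LIMSEQ_const_iff)
qed

lemma test_fun_C1:
  assumes "test_fun \<Omega> u"
  shows "\<And>x. u differentiable (at x)" and "continuous_on UNIV u"
    and "\<And>b. b \<in> Basis \<Longrightarrow> continuous_on UNIV (pderiv b u)"
proof -
  have "Ck (Suc 0) u"
    using assms by (simp add: test_fun_def smooth_def)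
  then show "\<And>x. u differentiable (at x)" "continuous_on UNIV u"
    and "\<And>b. b \<in> Basis \<Longrightarrow> continuous_on UNIV (pderiv b u)"
    by simp_all
qed

lemma outside_support_eq_0: "x \<notin> closure {x. u x \<noteq> 0} \<Longrightarrow> u x = (0::'b::zero)"
  using closure_subset[of "{x. u x \<noteq> 0}"] by auto

lemma pderiv_outside_support_eq_0:
  fixes u :: "'a::euclidean_space \<Rightarrow> real"
  assumes "x \<notin> closure {x. u x \<noteq> 0}"
  shows "pderiv b u x = 0"
proof -
  have "(u has_derivative (\<lambda>v. 0)) (at x)"
  proof (rule has_derivative_transform_within_open)
    show "((\<lambda>x. 0) has_derivative (\<lambda>v. 0)) (at x)"
      by simp
    show "open (- closure {x. u x \<noteq> 0})"
      by (simp add: open_Compl)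
    show "x \<in> - closure {x. u x \<noteq> 0}"
      using assms by simp
    show "0 = u y" if "y \<in> - closure {x. u x \<noteq> 0}" for y
      using outside_support_eq_0[of y u] that by simp
  qed
  then show ?thesis
    unfolding pderiv_def using frechet_derivative_at by metis
qed

lemma test_fun_pderiv:
  assumes "test_fun \<Omega> u" "b \<in> Basis"
  shows "test_fun \<Omega> (pderiv b u)"
proof -
  have support: "{x. pderiv b u x \<noteq> 0} \<subseteq> closure {x. u x \<noteq> 0}"
    using pderiv_outside_support_eq_0 by blast
  then have "closure {x. pderiv b u x \<noteq> 0} \<subseteq> closure {x. u x \<noteq> 0}"
    by (rule closure_minimal) simp
  moreover have "Ck (Suc k) u" for k
    using assms(1) by (simp add: test_fun_def smooth_def)
  then have "smooth (pderiv b u)"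
    using assms(2) by (simp add: smooth_def)
  moreover have "bounded {x. pderiv b u x \<noteq> 0}"
    using assms(1) support unfolding test_fun_def by (meson bounded_subset compact_imp_bounded)
  ultimately show ?thesis
    using assms(1) unfolding test_fun_def by (auto simp: compact_closure)
qed

lemma integrable_lebesgue_on_compact_support:
  fixes g :: "'a::euclidean_space \<Rightarrow> real"
  assumes "open \<Omega>" "continuous_on UNIV g" "compact K" "K \<subseteq> \<Omega>" "\<And>x. x \<notin> K \<Longrightarrow> g x = 0"
  shows "integrable (lebesgue_on \<Omega>) g" and "integral\<^sup>L (lebesgue_on \<Omega>) g = integral\<^sup>L lborel g"
proof -
  have g_borel: "g \<in> borel_measurable lborel"
    using assms(2) by (simp add: borel_measurable_continuous_onI)
  have restrict: "(\<lambda>x. indicator \<Omega> x *\<^sub>R g x) = g"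
    using assms(4,5) by (auto simp: fun_eq_iff indicator_def)
  have \<Omega>: "\<Omega> \<inter> space lebesgue \<in> sets lebesgue"
    using borel_open[OF assms(1)] by simp
  show "integrable (lebesgue_on \<Omega>) g"
    unfolding integrable_restrict_space[OF \<Omega>] restrict
    using integrable_completion[OF g_borel] integrable_lborel_compact_support[OF assms(2,3,5)] by simp
  show "integral\<^sup>L (lebesgue_on \<Omega>) g = integral\<^sup>L lborel g"
    unfolding integral_restrict_space[OF \<Omega>] restrict using integral_completion[OF g_borel] by simp
qed

lemma test_fun_L2:
  assumes "open \<Omega>" "test_fun \<Omega> u"
  shows "L2 \<Omega> u"
proof -
  have K: "compact (closure {x. u x \<noteq> 0})" "closure {x. u x \<noteq> 0} \<subseteq> \<Omega>"
    using assms(2) by (auto simp: test_fun_def)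
  have u: "continuous_on UNIV u"
    using test_fun_C1[OF assms(2)] by blast
  have "integrable (lebesgue_on \<Omega>) u"
    by (rule integrable_lebesgue_on_compact_support(1)[OF assms(1) u K]) (rule outside_support_eq_0)
  moreover have "integrable (lebesgue_on \<Omega>) (\<lambda>x. (u x)\<^sup>2)"
  proof (rule integrable_lebesgue_on_compact_support(1)[OF assms(1) _ K])
    show "continuous_on UNIV (\<lambda>x. (u x)\<^sup>2)"
      using u by (intro continuous_intros)
    show "(u x)\<^sup>2 = 0" if "x \<notin> closure {x. u x \<noteq> 0}" for x
      using outside_support_eq_0[OF that] by simp
  qed
  ultimately show ?thesis
    unfolding L2_def by auto
qed

text \<open>Integration by parts: \<open>\<partial>\<^sub>b (u \<phi>)\<close> integrates to zero as \<open>u \<phi>\<close> has compact support.\<close>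

lemma test_fun_integration_by_parts:
  assumes "open \<Omega>" "test_fun \<Omega> u" "test_fun \<Omega> \<phi>" "b \<in> Basis"
  shows "integrable (lebesgue_on \<Omega>) (\<lambda>x. u x * pderiv b \<phi> x)"
    and "integrable (lebesgue_on \<Omega>) (\<lambda>x. pderiv b u x * \<phi> x)"
    and "(\<integral>x. u x * pderiv b \<phi> x \<partial>lebesgue_on \<Omega>) = - (\<integral>x. pderiv b u x * \<phi> x \<partial>lebesgue_on \<Omega>)"
proof -
  let ?K = "closure {x. \<phi> x \<noteq> 0}"
  have K: "compact ?K" "?K \<subseteq> \<Omega>"
    using assms(3) by (auto simp: test_fun_def)
  note u = test_fun_C1[OF assms(2)] and \<phi> = test_fun_C1[OF assms(3)]
  define g\<^sub>1 where "g\<^sub>1 x = u x * pderiv b \<phi> x" for x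
  define g\<^sub>2 where "g\<^sub>2 x = pderiv b u x * \<phi> x" for x
  have g_cont: "continuous_on UNIV g\<^sub>1" "continuous_on UNIV g\<^sub>2"
    unfolding g\<^sub>1_def g\<^sub>2_def using u \<phi> assms(4) by (auto intro!: continuous_intros)
  have g_supp: "g\<^sub>1 x = 0" "g\<^sub>2 x = 0" if "x \<notin> ?K" for x
    unfolding g\<^sub>1_def g\<^sub>2_def using pderiv_outside_support_eq_0[OF that] outside_support_eq_0[OF that] by simp_all
  note g\<^sub>1 = integrable_lebesgue_on_compact_support[OF assms(1) g_cont(1) K g_supp(1)]
    and g\<^sub>2 = integrable_lebesgue_on_compact_support[OF assms(1) g_cont(2) K g_supp(2)]
  define W where "W x v = u x * frechet_derivative \<phi> (at x) v + frechet_derivative u (at x) v * \<phi> x" for x v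
  have deriv: "((\<lambda>x. u x * \<phi> x) has_derivative W x) (at x)" for x
    unfolding W_def using u(1)[of x] \<phi>(1)[of x]
    by (auto intro!: derivative_eq_intros simp: frechet_derivative_works[symmetric])
  have W_b: "(\<lambda>x. W x b) = (\<lambda>x. g\<^sub>1 x + g\<^sub>2 x)"
    by (auto simp: W_def g\<^sub>1_def g\<^sub>2_def pderiv_def)
  have "(\<integral>x. W x b \<partial>lborel) = 0"
  proof (rule integral_directional_derivative_eq_0[OF deriv _ K(1)])
    show "continuous_on UNIV (\<lambda>x. W x b)"
      unfolding W_b using g_cont by (rule continuous_on_add)
    show "u x * \<phi> x = 0" if "x \<notin> ?K" for x
      using outside_support_eq_0[OF that] by simp
  qed
  then show "integrable (lebesgue_on \<Omega>) (\<lambda>x. u x * pderiv b \<phi> x)"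
    and "integrable (lebesgue_on \<Omega>) (\<lambda>x. pderiv b u x * \<phi> x)"
    and "(\<integral>x. u x * pderiv b \<phi> x \<partial>lebesgue_on \<Omega>) = - (\<integral>x. pderiv b u x * \<phi> x \<partial>lebesgue_on \<Omega>)"
    using g\<^sub>1 g\<^sub>2 Bochner_Integration.integral_add[OF
        integrable_lborel_compact_support[OF g_cont(1) K(1) g_supp(1)]
        integrable_lborel_compact_support[OF g_cont(2) K(1) g_supp(2)]]
    unfolding W_b g\<^sub>1_def[abs_def] g\<^sub>2_def[abs_def] by simp_all
qed

lemma test_fun_pderiv_weak_L2:
  assumes "open \<Omega>" "test_fun \<Omega> u" "b \<in> Basis"
  shows "L2 \<Omega> (pderiv b u) \<and> weak_pderiv \<Omega> b u (pderiv b u)"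
  using test_fun_L2[OF assms(1) test_fun_pderiv[OF assms(2,3)]]
    test_fun_integration_by_parts[OF assms(1,2) _ assms(3)]
  by (simp add: weak_pderiv_def)

lemma test_fun_H1: "open \<Omega> \<Longrightarrow> test_fun \<Omega> u \<Longrightarrow> H1 \<Omega> u"
  unfolding H1_def using test_fun_L2 test_fun_pderiv_weak_L2 by blast

lemma test_fun_H2:
  assumes "open \<Omega>" "test_fun \<Omega> u"
  shows "H2 \<Omega> u"
  unfolding H2_def
proof (intro conjI ballI)
  show "L2 \<Omega> u"
    using test_fun_L2[OF assms] .
  fix b :: 'a assume b: "b \<in> Basis"
  show "\<exists>g. L2 \<Omega> g \<and> weak_pderiv \<Omega> b u g \<and> (\<forall>c\<in>Basis. \<exists>h. L2 \<Omega> h \<and> weak_pderiv \<Omega> c g h)"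
    using test_fun_pderiv_weak_L2[OF assms b]
      test_fun_pderiv_weak_L2[OF assms(1) test_fun_pderiv[OF assms(2) b]] by blast
qed

lemma test_fun_H10:
  assumes "open \<Omega>" "test_fun \<Omega> u"
  shows "H10 \<Omega> u"
  unfolding H10_def
proof (intro conjI exI[of _ "\<lambda>k. u"] allI ballI)
  show "H1 \<Omega> u" "test_fun \<Omega> u" "(\<lambda>k. \<integral>x. (u x - u x)\<^sup>2 \<partial>lebesgue_on \<Omega>) \<longlonglongrightarrow> 0"
    using test_fun_H1[OF assms] assms(2) by simp_all
  show "\<exists>g. L2 \<Omega> g \<and> weak_pderiv \<Omega> b u g \<and>
          (\<lambda>k. \<integral>x. (pderiv b u x - g x)\<^sup>2 \<partial>lebesgue_on \<Omega>) \<longlonglongrightarrow> 0" if "b \<in> Basis" for b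
    using test_fun_pderiv_weak_L2[OF assms that] by (intro exI[of _ "pderiv b u"]) simp
qed

lemma Lp_norm_infinity_ge:
  fixes v :: "'a::euclidean_space \<Rightarrow> real"
  assumes "Lp \<infinity> \<Omega> v" "\<Omega> \<in> sets lebesgue" "S \<subseteq> \<Omega>" "S \<in> sets lebesgue" "emeasure lebesgue S \<noteq> 0"
    and "\<And>x. x \<in> S \<Longrightarrow> c \<le> \<bar>v x\<bar>"
  shows "c \<le> Lp_norm \<infinity> \<Omega> v"
proof -
  let ?A = "{C. 0 \<le> C \<and> (AE x in lebesgue_on \<Omega>. \<bar>v x\<bar> \<le> C)}"
  obtain C\<^sub>0 where "AE x in lebesgue_on \<Omega>. \<bar>v x\<bar> \<le> C\<^sub>0"
    using assms(1) by (auto simp: Lp_def)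
  then have "max C\<^sub>0 0 \<in> ?A"
    by (auto elim!: AE_mp)
  then have "?A \<noteq> {}"
    by blast
  moreover have "c \<le> C" if "C \<in> ?A" for C
  proof (rule ccontr)
    assume "\<not> c \<le> C"
    have "AE x in lebesgue. x \<in> \<Omega> \<longrightarrow> \<bar>v x\<bar> \<le> C"
      using that AE_restrict_space_iff[of \<Omega> lebesgue] assms(2) by simp
    then have "AE x in lebesgue. x \<notin> S"
      by (rule eventually_mono) (use assms(3,6) \<open>\<not> c \<le> C\<close> in force)
    then show False
      using AE_iff_measurable[OF assms(4), of "\<lambda>x. x \<notin> S"] assms(5) by auto
  qed
  ultimately have "c \<le> Inf ?A"
    by (rule cInf_greatest)
  then show ?thesis
    by (simp add: Lp_norm_def)
qed

lemma Lp_norm_finite_ge: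
  fixes v :: "'a::euclidean_space \<Rightarrow> real"
  assumes "Lp p \<Omega> v" "0 < p" "p \<noteq> \<infinity>" "\<Omega> \<in> sets lebesgue" "S \<subseteq> \<Omega>" "S \<in> sets lebesgue"
    and "0 < measure lebesgue S" "0 \<le> c" "\<And>x. x \<in> S \<Longrightarrow> c \<le> \<bar>v x\<bar>"
  shows "c * measure lebesgue S powr (1 / enn2real p) \<le> Lp_norm p \<Omega> v"
proof -
  define q where "q = enn2real p"
  have "0 < q"
    using assms(2,3) by (simp add: q_def enn2real_positive_iff top.not_eq_extremum)
  have \<Omega>: "\<Omega> \<inter> space lebesgue \<in> sets lebesgue"
    using assms(4) by simp
  have "emeasure lebesgue S \<noteq> \<infinity>"
    using assms(7) by (auto simp: measure_def)
  then have "integrable (lebesgue_on \<Omega>) (\<lambda>x. indicator S x * c powr q)"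
    using assms(5,6) by (intro integrable_mult_left integrable_real_indicator)
      (auto simp: sets_restrict_space_iff[OF \<Omega>] emeasure_restrict_space[OF \<Omega>] top.not_eq_extremum)
  moreover have "integrable (lebesgue_on \<Omega>) (\<lambda>x. \<bar>v x\<bar> powr q)"
    using assms(1,3) by (simp add: Lp_def q_def)
  ultimately have "(\<integral>x. indicator S x * c powr q \<partial>lebesgue_on \<Omega>) \<le> (\<integral>x. \<bar>v x\<bar> powr q \<partial>lebesgue_on \<Omega>)"
    using assms(8,9) by (intro integral_mono) (auto simp: indicator_def powr_mono2 \<open>0 < q\<close> less_imp_le)
  moreover have "measure (lebesgue_on \<Omega>) (S \<inter> \<Omega>) = measure lebesgue S"
    using assms(5) by (simp add: measure_restrict_space[OF \<Omega>] Int_absorb2)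
  ultimately have "measure lebesgue S * c powr q \<le> (\<integral>x. \<bar>v x\<bar> powr q \<partial>lebesgue_on \<Omega>)"
    by simp
  then have "(measure lebesgue S * c powr q) powr (1 / q) \<le> Lp_norm p \<Omega> v"
    using assms(3,7,8) \<open>0 < q\<close> by (auto simp: Lp_norm_def q_def intro!: powr_mono2)
  then show ?thesis
    using assms(7,8) \<open>0 < q\<close> by (simp add: powr_mult powr_powr q_def mult.commute)
qed

text \<open>For \<open>p = \<infinity>\<close> the factor is \<open>1\<close>, since \<open>enn2real \<infinity> = 0\<close> and \<open>1 / 0 = 0\<close>.\<close>

lemma Lp_norm_ge_on_subset:
  fixes v :: "'a::euclidean_space \<Rightarrow> real"
  assumes "Lp p \<Omega> v" "0 < p" "\<Omega> \<in> sets lebesgue" "S \<subseteq> \<Omega>" "S \<in> sets lebesgue"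
    and "0 < measure lebesgue S" "0 \<le> c" "\<And>x. x \<in> S \<Longrightarrow> c \<le> \<bar>v x\<bar>"
  shows "c * measure lebesgue S powr (1 / enn2real p) \<le> Lp_norm p \<Omega> v"
proof (cases "p = \<infinity>")
  case True
  have "emeasure lebesgue S \<noteq> 0"
    using assms(6) by (auto simp: measure_def)
  with True assms show ?thesis
    using Lp_norm_infinity_ge[of \<Omega> v S c] by simp
next
  case False
  then show ?thesis
    by (rule Lp_norm_finite_ge[OF assms(1,2) _ assms(3-7)]) (rule assms(8))
qed

theorem theorem3p1:
  fixes \<Omega> :: "'a::euclidean_space set" and p :: ennreal and f :: "real \<Rightarrow> real" and M :: real
  assumes "open \<Omega>" and "connected \<Omega>" and "\<Omega> \<noteq> {}"
    and "1 \<le> p"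
    and "\<And>u. H2 \<Omega> u \<Longrightarrow> H10 \<Omega> u \<Longrightarrow> Lp p \<Omega> (f \<circ> u)"
    and "M > 0"
    and "\<And>u. H2 \<Omega> u \<Longrightarrow> H10 \<Omega> u \<Longrightarrow> Lp_norm p \<Omega> (f \<circ> u) \<le> M"
  shows "\<exists>C>0. \<forall>x. \<bar>f x\<bar> \<le> C"
proof -
  obtain a where "a \<in> \<Omega>"
    using assms(3) by blast
  with assms(1) obtain r where r: "0 < r" "cball a r \<subseteq> \<Omega>"
    using open_contains_cball by blast
  define S where "S = cball a (r / 2)"
  define K where "K = measure lebesgue S powr (1 / enn2real p)"
  have S: "S \<subseteq> \<Omega>" "S \<in> sets lebesgue" "0 < measure lebesgue S"
    using r content_cball_pos[of "r / 2" a] by (auto simp: S_def)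
  have bound: "\<bar>f t\<bar> * K \<le> M" for t
  proof -
    obtain u where u: "test_fun \<Omega> u" "\<And>x. x \<in> S \<Longrightarrow> u x = t"
      using test_fun_const_on_ball[OF r] unfolding S_def by blast
    note u_sobolev = test_fun_H2[OF assms(1) u(1)] test_fun_H10[OF assms(1) u(1)]
    have "\<bar>f t\<bar> * K \<le> Lp_norm p \<Omega> (f \<circ> u)"
      unfolding K_def using assms(4) borel_open[OF assms(1)] S u(2)
      by (intro Lp_norm_ge_on_subset[OF assms(5)[OF u_sobolev]]) (auto simp: order.strict_trans2[OF zero_less_one])
    also have "\<dots> \<le> M"
      using assms(7)[OF u_sobolev] .
    finally show ?thesis .
  qed
  moreover have "0 < K"
    using S(3) by (simp add: K_def)
  ultimately show ?thesis
    using assms(6) by (intro exI[of _ "M / K"]) (auto simp: field_simps)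
qed

end
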